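(* Let $d=2$ and $E\subset[1,2]$. Suppose $M_E$ is bounded from $L^{p,1}_{rad}(\mathbb{R}^2)$ to $L^{q,\infty}(\mathbb{R}^2)$. Then there is a constant $C$ such that for any interval $I\subset[1,2]$ and $\delta>0$ with $\delta\le|I|\le1$, $$\delta^{\frac12+\frac1q}|I|^{\frac1q-\frac12}N(E\cap I,\delta)^{\frac1q}\le C\delta^{\frac1p}.$$
   Context: $M_Ef(x)=\sup_{t\in E}\left|\int_{\mathbb{S}^{1}}f(x-ty)\,d\sigma(y)\right|$ with $\sigma$ normalized arc-length on $\mathbb{S}^1$. $L^{p,s}$ is the Lorentz space; $L^{p,1}_{rad}$ its radial functions. $N(F,\delta)$ is the minimal number of intervals of length $\delta$ covering $F$. *)

theory Defs
  imports "HOL-Analysis.Analysis"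
begin

text \<open>The plane R^2 is modelled by the type complex; the unit circle S^1 is
  parametrised by cis theta, theta in [0, 2 pi], so normalised arc-length
  measure sigma corresponds to (1/(2 pi)) d theta.\<close>

definition outer_leb :: "complex set \<Rightarrow> ennreal" where
  "outer_leb A = (INF B \<in> {B \<in> sets lebesgue. A \<subseteq> B}. emeasure lebesgue B)"

definition ennpow :: "ennreal \<Rightarrow> real \<Rightarrow> ennreal" where
  "ennpow e a = (if e = \<infinity> then \<infinity> else ennreal (enn2real e powr a))"

definition distrib :: "(complex \<Rightarrow> ennreal) \<Rightarrow> real \<Rightarrow> ennreal" where
  "distrib g l = outer_leb {x. ennreal l < g x}"

definition lorentz_p1 :: "real \<Rightarrow> (complex \<Rightarrow> real) \<Rightarrow> ennreal" where
  "lorentz_p1 p f = ennreal p *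
     (\<integral>\<^sup>+ l. indicator {0<..} l * ennpow (distrib (\<lambda>x. ennreal \<bar>f x\<bar>) l) (1 / p) \<partial>lborel)"

definition weak_Lq :: "real \<Rightarrow> (complex \<Rightarrow> ennreal) \<Rightarrow> ennreal" where
  "weak_Lq q g = (SUP l \<in> {0<..}. ennreal l * ennpow (distrib g l) (1 / q))"

definition radial :: "(complex \<Rightarrow> real) \<Rightarrow> bool" where
  "radial f \<longleftrightarrow> (\<forall>x y. norm x = norm y \<longrightarrow> f x = f y)"

definition circ_avg :: "(complex \<Rightarrow> real) \<Rightarrow> complex \<Rightarrow> real \<Rightarrow> real" where
  "circ_avg f x t = (1 / (2 * pi)) *
     (\<integral>\<theta>\<in>{0..2*pi}. f (x - complex_of_real t * cis \<theta>) \<partial>lborel)"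

definition max_sph :: "real set \<Rightarrow> (complex \<Rightarrow> real) \<Rightarrow> complex \<Rightarrow> ennreal" where
  "max_sph E f x = (SUP t \<in> E. ennreal \<bar>circ_avg f x t\<bar>)"

definition cov_num :: "real set \<Rightarrow> real \<Rightarrow> nat" where
  "cov_num F \<delta> = (LEAST n. \<exists>c :: nat \<Rightarrow> real. F \<subseteq> (\<Union>i<n. {c i .. c i + \<delta>}))"

end

theory Submission
  imports Defs
begin

text \<open>Test the weak-type bound on the indicator \<open>f\<close> of the thin annulus \<open>R - \<delta> \<le> |z| \<le> R\<close>
  with \<open>R = 2b - a\<close>, whose \<open>L^{p,1}\<close> norm is \<open>O(\<delta>^{1/p})\<close>. Choose a \<open>\<delta>\<close>-separated set
  \<open>T \<subseteq> E \<inter> [a, b]\<close> with \<open>N(E \<inter> [a, b], \<delta>) \<le> 2 |T|\<close>. For \<open>t \<in> T\<close> and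
  \<open>R - t - \<delta>/2 \<le> |x| \<le> R - t\<close>, the circle of radius \<open>t\<close> about \<open>x\<close> reaches distance
  \<open>|x| + t \<in> [R - \<delta>/2, R]\<close> from the origin in the direction opposite to \<open>x\<close>; by second-order
  contact an arc of angle \<open>~ (\<delta>/(b - a))^{1/2}\<close> around that point stays in the annulus, and
  \<open>M_E f(x) \<ge> c (\<delta>/(b - a))^{1/2}\<close>. These annuli for distinct \<open>t\<close> are disjoint, each of
  measure \<open>~ (b - a) \<delta>\<close>, and the weak-type bound on this level set gives the estimate.\<close>

definition annulus :: "real \<Rightarrow> real \<Rightarrow> complex set" where
  "annulus r1 r2 = {z. r1 \<le> cmod z \<and> cmod z \<le> r2}"

lemma annulus_borel [measurable]: "annulus r1 r2 \<in> sets borel"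
  unfolding annulus_def by measurable

lemma radial_indicator_annulus: "radial (indicator (annulus r1 r2))"
  unfolding radial_def annulus_def by (simp add: indicator_def)

lemma uminus_in_annulus_iff [simp]: "- z \<in> annulus r1 r2 \<longleftrightarrow> z \<in> annulus r1 r2"
  unfolding annulus_def by simp

lemma emeasure_annulus:
  assumes "0 \<le> r1" "r1 \<le> r2"
  shows "emeasure lebesgue (annulus r1 r2) = ennreal (pi * (r2^2 - r1^2))"
proof -
  have "annulus r1 r2 = cball 0 r2 - ball 0 r1"
    by (auto simp: annulus_def)
  have vol: "unit_ball_vol (real DIM(complex)) = pi"
    using unit_ball_vol_even[of 1] by simp
  have "emeasure lborel (cball (0::complex) r2 - ball 0 r1)
      = emeasure lborel (cball (0::complex) r2) - emeasure lborel (ball (0::complex) r1)"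
    using assms emeasure_lborel_ball_finite[of "0::complex" r1] by (intro emeasure_Diff) auto
  also have "\<dots> = ennreal (pi * r2^2) - ennreal (pi * r1^2)"
    using assms emeasure_cball[of r2 "0::complex"] emeasure_ball[of r1 "0::complex"] vol by simp
  also have "\<dots> = ennreal (pi * (r2^2 - r1^2))"
    using assms by (subst ennreal_minus) (auto simp: algebra_simps intro!: mult_left_mono power_mono)
  finally show ?thesis
    using \<open>annulus r1 r2 = cball 0 r2 - ball 0 r1\<close> annulus_borel[of r1 r2]
    by (simp add: emeasure_completion)
qed

lemma outer_leb_le_emeasure: "A \<in> sets lebesgue \<Longrightarrow> outer_leb A \<le> emeasure lebesgue A"
  unfolding outer_leb_def by (rule INF_lower) auto

lemma emeasure_le_outer_leb: "X \<in> sets lebesgue \<Longrightarrow> X \<subseteq> S \<Longrightarrow> emeasure lebesgue X \<le> outer_leb S"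
  unfolding outer_leb_def by (rule INF_greatest) (metis (no_types, lifting) emeasure_mono mem_Collect_eq subset_trans)

lemma outer_leb_empty [simp]: "outer_leb {} = 0"
  using outer_leb_le_emeasure[of "{}"] by simp

lemma ennpow_mono: "0 \<le> a \<Longrightarrow> e1 \<le> e2 \<Longrightarrow> ennpow e1 a \<le> ennpow e2 a"
  unfolding ennpow_def by (auto simp: top_unique less_top intro!: powr_mono2 enn2real_mono)

lemma ennpow_ennreal: "0 \<le> v \<Longrightarrow> ennpow (ennreal v) a = ennreal (v powr a)"
  unfolding ennpow_def by simp

lemma lorentz_p1_indicator_le:
  assumes p: "0 < p" and A: "A \<in> sets lebesgue" "emeasure lebesgue A \<le> ennreal V" and V: "0 \<le> V"
  shows "lorentz_p1 p (indicator A) \<le> ennreal (p * V powr (1/p))"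
proof -
  let ?d = "distrib (\<lambda>x. ennreal \<bar>indicator A x :: real\<bar>)"
  have level_set: "{x. ennreal l < ennreal \<bar>indicator A x :: real\<bar>} = (if l < 1 then A else {})"
    if "0 < l" for l :: real
    using that by (auto simp: indicator_def)
  have "indicator {0<..} l * ennpow (?d l) (1/p) \<le> ennreal (V powr (1/p)) * indicator {0<..1} l"
    for l :: real
  proof (cases "0 < l \<and> l < 1")
    case True
    then have "?d l \<le> ennreal V"
      using outer_leb_le_emeasure[OF A(1)] A(2) level_set[of l] by (simp add: distrib_def)
    then have "ennpow (?d l) (1/p) \<le> ennreal (V powr (1/p))"
      using ennpow_mono[of "1/p"] ennpow_ennreal[OF V] p by (metis less_eq_real_def zero_le_divide_1_iff)
    then show ?thesis
      using True by simp
  next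
    case False
    then show ?thesis
      using level_set[of l] by (auto simp: distrib_def ennpow_def)
  qed
  then have "(\<integral>\<^sup>+ l. indicator {0<..} l * ennpow (?d l) (1/p) \<partial>lborel)
      \<le> (\<integral>\<^sup>+ l. ennreal (V powr (1/p)) * indicator {0<..1::real} l \<partial>lborel)"
    by (intro nn_integral_mono) simp
  also have "\<dots> = ennreal (V powr (1/p))"
    by (subst nn_integral_cmult_indicator) auto
  finally have "lorentz_p1 p (indicator A) \<le> ennreal p * ennreal (V powr (1/p))"
    unfolding lorentz_p1_def by (intro mult_left_mono) auto
  then show ?thesis
    using p by (simp add: ennreal_mult)
qed

lemma weak_Lq_ge:
  assumes X: "X \<in> sets lebesgue" "X \<subseteq> {x. ennreal l < g x}" "ennreal m \<le> emeasure lebesgue X"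
    and "0 < l" "0 \<le> m" "0 < q"
  shows "ennreal (l * m powr (1/q)) \<le> weak_Lq q g"
proof -
  have "ennreal m \<le> distrib g l"
    unfolding distrib_def using X emeasure_le_outer_leb order_trans by blast
  then have "ennreal (m powr (1/q)) \<le> ennpow (distrib g l) (1/q)"
    using assms ennpow_mono[of "1/q"] by (simp add: ennpow_ennreal[symmetric])
  then have "ennreal l * ennreal (m powr (1/q)) \<le> weak_Lq q g"
    unfolding weak_Lq_def using \<open>0 < l\<close>
    by (intro order_trans[OF mult_left_mono SUP_upper[of l]]) auto
  then show ?thesis
    using \<open>0 < l\<close> by (simp add: ennreal_mult)
qed

lemma cos_ge_one_minus_sq_half: "1 - u^2 / 2 \<le> cos (u::real)"
proof -
  have "sin (u/2)^2 \<le> (u/2)^2"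
    using abs_sin_x_le_abs_x[of "u/2"] by (metis abs_ge_zero power2_abs power_mono)
  then show ?thesis
    using cos_double_sin[of "u/2"] by (simp add: power2_eq_square)
qed

lemma norm_diff_cis_opposite_ge:
  fixes x :: complex and t w \<theta> :: real
  assumes "\<bar>\<theta> - (Arg x + pi)\<bar> \<le> w" "0 \<le> t"
  shows "(cmod x + t)^2 - cmod x * t * w^2 \<le> (cmod (x - complex_of_real t * cis \<theta>))^2"
proof -
  define u where "u = \<theta> - (Arg x + pi)"
  have polar: "x = complex_of_real (cmod x) * exp (\<i> * complex_of_real (Arg x))"
    using rcis_cmod_Arg[of x] by (simp add: rcis_def cis_conv_exp)
  have "(cmod (x - complex_of_real t * cis \<theta>))^2 = (cmod x)^2 + t^2 - 2 * cmod x * t * cos (Arg x - \<theta>)"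
    by (subst polar) (unfold cis_conv_exp, rule cmod_diff_squared)
  also have "cos (Arg x - \<theta>) = - cos u"
    unfolding u_def by (simp add: cos_diff)
  finally have norm_sq: "(cmod (x - complex_of_real t * cis \<theta>))^2 = (cmod x)^2 + t^2 + 2 * cmod x * t * cos u"
    by simp
  have "u^2 \<le> w^2"
    using assms(1) unfolding u_def by (metis abs_ge_zero power2_abs power_mono)
  then have "1 - w^2 / 2 \<le> cos u"
    using cos_ge_one_minus_sq_half[of u] by linarith
  then have "2 * cmod x * t * (1 - w^2 / 2) \<le> 2 * cmod x * t * cos u"
    using assms(2) by (intro mult_left_mono) auto
  then show ?thesis
    unfolding norm_sq by (simp add: power2_eq_square algebra_simps)
qed

lemma opposite_arc_in_annulus:
  fixes x :: complex and R \<delta> t w \<theta> :: real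
  assumes \<theta>: "\<bar>\<theta> - (Arg x + pi)\<bar> \<le> w" and "0 \<le> t"
    and x: "R - \<delta>/2 \<le> cmod x + t" "cmod x + t \<le> R"
    and "1 \<le> R" "0 < \<delta>" "\<delta> \<le> 1" and w: "cmod x * t * w^2 \<le> \<delta>/4"
  shows "x - complex_of_real t * cis \<theta> \<in> annulus (R - \<delta>) R"
proof -
  have "(R - \<delta>)^2 \<le> (R - \<delta>/2)^2 - \<delta>/4"
  proof -
    have "\<delta> * \<delta> \<le> \<delta>" "\<delta> \<le> R * \<delta>"
      using assms(5-7) by (simp_all add: mult_le_cancel_right1)
    then show ?thesis
      by (simp add: power2_eq_square algebra_simps)
  qed
  moreover have "(R - \<delta>/2)^2 \<le> (cmod x + t)^2"
    using x assms(5-7) by (intro power_mono) auto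
  moreover have "(cmod x + t)^2 - \<delta>/4 \<le> (cmod (x - complex_of_real t * cis \<theta>))^2"
    using norm_diff_cis_opposite_ge[OF \<theta> \<open>0 \<le> t\<close>] w by linarith
  ultimately have "(R - \<delta>)^2 \<le> (cmod (x - complex_of_real t * cis \<theta>))^2"
    by linarith
  then have "R - \<delta> \<le> cmod (x - complex_of_real t * cis \<theta>)"
    by (rule power2_le_imp_le[OF _ norm_ge_zero])
  moreover have "cmod (x - complex_of_real t * cis \<theta>) \<le> R"
    using norm_triangle_ineq4[of x "complex_of_real t * cis \<theta>"] x \<open>0 \<le> t\<close> by (simp add: norm_mult)
  ultimately show ?thesis
    unfolding annulus_def by simp
qed

lemma borel_measurable_cis [measurable]: "cis \<in> borel_measurable borel"
  by (intro borel_measurable_continuous_onI continuous_intros)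

lemma circ_avg_indicator_ge:
  assumes A: "A \<in> sets borel" and w: "0 \<le> c - w" "c + w \<le> 2*pi" "0 \<le> w"
    and arc: "\<And>\<theta>. \<theta> \<in> {c-w..c+w} \<Longrightarrow> x - complex_of_real t * cis \<theta> \<in> A"
  shows "w / pi \<le> circ_avg (indicator A) x t"
proof -
  define P where "P = {\<theta>. x - complex_of_real t * cis \<theta> \<in> A}"
  have "P \<in> sets borel"
    unfolding P_def using A by measurable
  have "indicator A (x - complex_of_real t * cis \<theta>) = (indicator P \<theta> :: real)" for \<theta>
    unfolding P_def by (simp add: indicator_def)
  then have "circ_avg (indicator A) x t = measure lborel ({0..2*pi} \<inter> P) / (2*pi)"
    unfolding circ_avg_def set_lebesgue_integral_def
    by (simp add: indicator_inter_arith[symmetric])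
  moreover have "measure lborel {c-w..c+w} \<le> measure lborel ({0..2*pi} \<inter> P)"
  proof (rule measure_mono_fmeasurable)
    have "{c-w..c+w} \<subseteq> {0..2*pi}"
      using w by auto
    then show "{c-w..c+w} \<subseteq> {0..2*pi} \<inter> P"
      using arc unfolding P_def by blast
    show "{0..2*pi} \<inter> P \<in> fmeasurable lborel"
      by (rule fmeasurableI2[of "{0..2*pi}"]) (use \<open>P \<in> sets borel\<close> in \<open>auto simp: fmeasurable_def\<close>)
  qed simp
  ultimately show ?thesis
    using w by (simp add: divide_simps)
qed

text \<open>Since \<open>circ_avg\<close> integrates over \<open>\<theta> \<in> [0, 2\<pi>]\<close>, the arc around \<open>Arg x + \<pi>\<close> must not
  wrap around; \<open>0 \<le> Re x\<close> keeps it inside.\<close>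

lemma max_sph_annulus_ge:
  fixes x :: complex
  assumes "t \<in> E" "0 \<le> t" "0 \<le> Re x" and x: "x \<in> annulus (R - t - \<delta>/2) (R - t)"
    and "1 \<le> R" "0 < \<delta>" "\<delta> \<le> 1" "0 \<le> w" "w \<le> pi/2" "cmod x * t * w^2 \<le> \<delta>/4"
  shows "ennreal (w / pi) \<le> max_sph E (indicator (annulus (R - \<delta>) R)) x"
proof -
  have "\<bar>Arg x\<bar> \<le> pi/2"
    using Arg_Re_nonneg \<open>0 \<le> Re x\<close> by blast
  moreover have "x - complex_of_real t * cis \<theta> \<in> annulus (R - \<delta>) R"
    if "\<theta> \<in> {Arg x + pi - w..Arg x + pi + w}" for \<theta>
    using that assms x by (intro opposite_arc_in_annulus) (auto simp: annulus_def)
  ultimately have "w / pi \<le> circ_avg (indicator (annulus (R - \<delta>) R)) x t"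
    using assms by (intro circ_avg_indicator_ge[where c = "Arg x + pi"]) auto
  then have "ennreal (w / pi) \<le> ennreal \<bar>circ_avg (indicator (annulus (R - \<delta>) R)) x t\<bar>"
    by (intro ennreal_leI) auto
  also have "\<dots> \<le> max_sph E (indicator (annulus (R - \<delta>) R)) x"
    unfolding max_sph_def using \<open>t \<in> E\<close> by (rule SUP_upper)
  finally show ?thesis .
qed

definition delta_separated :: "real \<Rightarrow> real set \<Rightarrow> bool" where
  "delta_separated \<delta> T \<longleftrightarrow> (\<forall>t\<in>T. \<forall>t'\<in>T. t \<noteq> t' \<longrightarrow> \<delta> \<le> \<bar>t - t'\<bar>)"

lemma cov_num_le_card:
  assumes "finite B" "F \<subseteq> (\<Union>k\<in>B. {c k .. c k + \<delta>})"
  shows "cov_num F \<delta> \<le> card B"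
proof -
  define n where "n = card B"
  obtain g where "bij_betw g {..<n} B"
    unfolding n_def using ex_bij_betw_nat_finite[OF \<open>finite B\<close>] atLeast0LessThan by metis
  then have "B = g ` {..<n}"
    by (simp add: bij_betw_def)
  then have "(\<Union>k\<in>B. {c k .. c k + \<delta>}) = (\<Union>i<n. {c (g i) .. c (g i) + \<delta>})"
    by (simp add: image_image)
  then have "F \<subseteq> (\<Union>i<n. {c (g i) .. c (g i) + \<delta>})"
    using assms(2) by simp
  then show ?thesis
    unfolding cov_num_def n_def[symmetric] by (intro Least_le exI[of _ "\<lambda>i. c (g i)"])
qed

lemma sparse_subset_half:
  fixes B :: "nat set"
  assumes "finite B"
  obtains B' where "B' \<subseteq> B" "card B \<le> 2 * card B'"
    "\<And>k k'. k \<in> B' \<Longrightarrow> k' \<in> B' \<Longrightarrow> k < k' \<Longrightarrow> k + 2 \<le> k'"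
proof -
  define B0 where "B0 = {k \<in> B. even k}"
  define B1 where "B1 = {k \<in> B. odd k}"
  have "card B = card B0 + card B1"
    unfolding B0_def B1_def using assms by (subst card_Un_disjoint[symmetric]) (auto intro: arg_cong[where f = card])
  moreover have "k + 2 \<le> k'" if "k \<in> B0 \<and> k' \<in> B0 \<or> k \<in> B1 \<and> k' \<in> B1" "k < k'" for k k'
    using that unfolding B0_def B1_def by (auto elim!: evenE oddE)
  moreover have "B0 \<subseteq> B" "B1 \<subseteq> B"
    unfolding B0_def B1_def by auto
  ultimately show ?thesis
    using that[of B0] that[of B1] by (cases "card B1 \<le> card B0") auto
qed

lemma grid_cell_index:
  assumes "0 < \<delta>" "a \<le> t" "t \<le> b"
  obtains k :: nat where "k \<le> nat \<lceil>(b - a) / \<delta>\<rceil>" "t \<in> {a + real k * \<delta> .. a + real k * \<delta> + \<delta>}"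
proof
  define k where "k = nat \<lfloor>(t - a) / \<delta>\<rfloor>"
  have "real k \<le> (t - a) / \<delta>" "(t - a) / \<delta> < real k + 1" "(t - a) / \<delta> \<le> (b - a) / \<delta>"
    unfolding k_def using assms by (auto intro: divide_right_mono)
  then show "t \<in> {a + real k * \<delta> .. a + real k * \<delta> + \<delta>}"
    using assms(1) by (auto simp: field_simps)
  have "\<lfloor>(t - a) / \<delta>\<rfloor> \<le> \<lceil>(b - a) / \<delta>\<rceil>"
    using \<open>(t - a) / \<delta> \<le> (b - a) / \<delta>\<close> by (meson ceiling_mono floor_le_ceiling order_trans)
  then show "k \<le> nat \<lceil>(b - a) / \<delta>\<rceil>"
    unfolding k_def by linarith
qed

lemma cov_num_le_twice_separated:
  fixes F :: "real set"
  assumes "0 < \<delta>" "F \<subseteq> {a..b}"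
  obtains T where "finite T" "T \<subseteq> F" "delta_separated \<delta> T" "cov_num F \<delta> \<le> 2 * card T"
proof -
  define bin where "bin k = {a + real k * \<delta> .. a + real k * \<delta> + \<delta>}" for k :: nat
  define B where "B = {k. k \<le> nat \<lceil>(b - a) / \<delta>\<rceil> \<and> F \<inter> bin k \<noteq> {}}"
  have "finite B"
    unfolding B_def by auto
  have "F \<subseteq> (\<Union>k\<in>B. bin k)"
  proof
    fix t assume "t \<in> F"
    then have "a \<le> t" "t \<le> b"
      using assms(2) by auto
    then obtain k where "k \<le> nat \<lceil>(b - a) / \<delta>\<rceil>" "t \<in> bin k"
      unfolding bin_def by (rule grid_cell_index[OF assms(1)])
    then show "t \<in> (\<Union>k\<in>B. bin k)"
      using \<open>t \<in> F\<close> unfolding B_def by blast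
  qed
  then have cov_B: "cov_num F \<delta> \<le> card B"
    unfolding bin_def using \<open>finite B\<close> by (intro cov_num_le_card) auto
  obtain B' where B': "B' \<subseteq> B" "card B \<le> 2 * card B'"
    and sparse: "\<And>k k'. k \<in> B' \<Longrightarrow> k' \<in> B' \<Longrightarrow> k < k' \<Longrightarrow> k + 2 \<le> k'"
    using sparse_subset_half[OF \<open>finite B\<close>] by blast
  define pick where "pick k = (SOME t. t \<in> F \<inter> bin k)" for k
  have pick: "pick k \<in> F \<inter> bin k" if "k \<in> B" for k
    using that unfolding pick_def B_def by (metis (mono_tags, lifting) ex_in_conv mem_Collect_eq someI_ex)
  have pick_gap: "pick k + \<delta> \<le> pick k'" if "k \<in> B'" "k' \<in> B'" "k < k'" for k k'
  proof -
    have "real k + 2 \<le> real k'"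
      using sparse[OF that] by linarith
    then have "(real k + 2) * \<delta> \<le> real k' * \<delta>"
      using assms(1) by (intro mult_right_mono) auto
    then show ?thesis
      using pick[of k] pick[of k'] that B'(1) unfolding bin_def by (force simp: algebra_simps)
  qed
  have pick_sep: "\<delta> \<le> \<bar>pick k - pick k'\<bar>" if "k \<in> B'" "k' \<in> B'" "k \<noteq> k'" for k k'
    using that pick_gap[of k k'] pick_gap[of k' k] by (cases "k < k'") auto
  then have "delta_separated \<delta> (pick ` B')"
    unfolding delta_separated_def by blast
  moreover have "inj_on pick B'"
    using pick_sep assms(1) by (fastforce intro: inj_onI)
  then have "cov_num F \<delta> \<le> 2 * card (pick ` B')"
    using cov_B B'(2) by (simp add: card_image)
  moreover have "finite (pick ` B')" "pick ` B' \<subseteq> F"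
    using B'(1) \<open>finite B\<close> pick by (auto intro: finite_subset)
  ultimately show ?thesis
    using that by blast
qed

lemma emeasure_le_twice_right_half:
  fixes S :: "complex set"
  assumes S: "S \<in> sets borel" and symmetric: "\<And>z. z \<in> S \<Longrightarrow> - z \<in> S"
  shows "emeasure lebesgue S \<le> 2 * emeasure lebesgue (S \<inter> {z. 0 \<le> Re z})"
proof -
  define H where "H = S \<inter> {z. 0 \<le> Re z}"
  define H' where "H' = (\<lambda>z. (-1) *\<^sub>R z + 0) ` H"
  have "H \<in> sets borel"
    unfolding H_def using S by measurable
  moreover have "H' = uminus -` H"
    unfolding H'_def by (force simp: image_iff)
  moreover have "uminus \<in> borel_measurable (borel :: complex measure)"
    by (intro borel_measurable_continuous_onI continuous_intros)
  ultimately have "H' \<in> sets borel"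
    using measurable_sets[of uminus borel borel H] by simp
  have "S \<subseteq> H \<union> H'"
    unfolding \<open>H' = uminus -` H\<close> H_def using symmetric by force
  then have "emeasure lebesgue S \<le> emeasure lebesgue (H \<union> H')"
    using \<open>H \<in> sets borel\<close> \<open>H' \<in> sets borel\<close> by (intro emeasure_mono) auto
  also have "\<dots> \<le> emeasure lebesgue H + emeasure lebesgue H'"
    using \<open>H \<in> sets borel\<close> \<open>H' \<in> sets borel\<close> by (intro emeasure_subadditive) auto
  also have "emeasure lebesgue H' = emeasure lebesgue H"
    unfolding H'_def using emeasure_lebesgue_affine[of "-1" 0 H] by simp
  finally show ?thesis
    unfolding H_def by (simp add: mult_2)
qed

lemma emeasure_disjoint_annuli_ge:
  assumes "finite T" "delta_separated \<delta> T" "0 < \<delta>" "\<delta> \<le> L" and T: "\<And>t. t \<in> T \<Longrightarrow> L \<le> R - t"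
  shows "ennreal (card T * (pi * L * \<delta> / 2)) \<le> emeasure lebesgue (\<Union>t\<in>T. annulus (R - t - \<delta>/2) (R - t))"
proof -
  have "ennreal (pi * L * \<delta> / 2) \<le> emeasure lebesgue (annulus (R - t - \<delta>/2) (R - t))" if "t \<in> T" for t
  proof -
    have "L * (\<delta>/2) \<le> (2 * (R - t) - \<delta>/2) * (\<delta>/2)"
      using T[OF that] assms(3,4) by (intro mult_right_mono) auto
    also have "\<dots> = (R - t)^2 - (R - t - \<delta>/2)^2"
      by (simp add: power2_eq_square algebra_simps)
    finally show ?thesis
      using T[OF that] assms(3,4) by (subst emeasure_annulus) auto
  qed
  then have "(\<Sum>t\<in>T. ennreal (pi * L * \<delta> / 2)) \<le> (\<Sum>t\<in>T. emeasure lebesgue (annulus (R - t - \<delta>/2) (R - t)))"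
    by (rule sum_mono)
  moreover have "ennreal (card T * (pi * L * \<delta> / 2)) = (\<Sum>t\<in>T. ennreal (pi * L * \<delta> / 2))"
    using assms(3,4) by (subst ennreal_mult) (auto simp: ennreal_of_nat_eq_real_of_nat)
  ultimately have "ennreal (card T * (pi * L * \<delta> / 2)) \<le> (\<Sum>t\<in>T. emeasure lebesgue (annulus (R - t - \<delta>/2) (R - t)))"
    by simp
  also have "\<dots> = emeasure lebesgue (\<Union>t\<in>T. annulus (R - t - \<delta>/2) (R - t))"
  proof (rule sum_emeasure)
    show "disjoint_family_on (\<lambda>t. annulus (R - t - \<delta>/2) (R - t)) T"
      using assms(2,3) unfolding disjoint_family_on_def delta_separated_def annulus_def by fastforce
  qed (use \<open>finite T\<close> in auto)
  finally show ?thesis .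
qed

lemma emeasure_right_half_annuli_ge:
  assumes "finite T" "delta_separated \<delta> T" "0 < \<delta>" "\<delta> \<le> L" "\<And>t. t \<in> T \<Longrightarrow> L \<le> R - t"
  shows "ennreal (card T * (pi * L * \<delta> / 4))
    \<le> emeasure lebesgue ((\<Union>t\<in>T. annulus (R - t - \<delta>/2) (R - t)) \<inter> {z. 0 \<le> Re z})"
proof -
  have "2 * ennreal (card T * (pi * L * \<delta> / 4)) = ennreal (2 * (card T * (pi * L * \<delta> / 4)))"
    using assms by (subst ennreal_mult) auto
  also have "2 * (card T * (pi * L * \<delta> / 4)) = card T * (pi * L * \<delta> / 2)"
    by simp
  also have "ennreal \<dots> \<le> emeasure lebesgue (\<Union>t\<in>T. annulus (R - t - \<delta>/2) (R - t))"
    using assms by (rule emeasure_disjoint_annuli_ge)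
  also have "\<dots> \<le> 2 * emeasure lebesgue ((\<Union>t\<in>T. annulus (R - t - \<delta>/2) (R - t)) \<inter> {z. 0 \<le> Re z})"
    using \<open>finite T\<close> by (intro emeasure_le_twice_right_half) auto
  finally show ?thesis
    by (simp add: ennreal_mult_le_mult_iff)
qed

lemma max_sph_thin_annulus_ge:
  fixes x :: complex
  assumes E: "E \<subseteq> {1..2}" and t: "t \<in> E \<inter> {a..b}" and x: "0 \<le> Re x" "x \<in> annulus (2*b - a - t - \<delta>/2) (2*b - a - t)"
    and "1 \<le> a" "0 < \<delta>" "\<delta> \<le> b - a" "b - a \<le> 1"
  shows "ennreal (sqrt (\<delta> / (b - a)) / (4 * pi)) \<le> max_sph E (indicator (annulus (2*b - a - \<delta>) (2*b - a))) x"
proof -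
  define L where "L = b - a"
  define w where "w = sqrt (\<delta> / L) / 4"
  have "0 < L" "\<delta> \<le> L"
    unfolding L_def using assms by auto
  have "w^2 = \<delta> / L / 16"
    unfolding w_def using \<open>0 < L\<close> \<open>0 < \<delta>\<close> by (simp add: power_divide)
  have "sqrt (\<delta> / L) \<le> 1" "0 \<le> sqrt (\<delta> / L)"
    using \<open>0 < L\<close> \<open>\<delta> \<le> L\<close> \<open>0 < \<delta>\<close> by auto
  then have "0 \<le> w" "w \<le> pi / 2"
    unfolding w_def using pi_gt3 by linarith+
  have "1 \<le> t" "t \<le> 2"
    using t E by auto
  then have "cmod x * t \<le> 2 * L * 2"
    using x(2) t unfolding annulus_def L_def by (intro mult_mono) auto
  then have "cmod x * t * w^2 \<le> \<delta> / 4"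
    using mult_right_mono[of "cmod x * t" "4 * L" "w^2"] \<open>0 < L\<close> \<open>0 < \<delta>\<close>
    unfolding \<open>w^2 = \<delta> / L / 16\<close> by (simp add: field_simps)
  then have "ennreal (w / pi) \<le> max_sph E (indicator (annulus (2*b - a - \<delta>) (2*b - a))) x"
    using t x \<open>1 \<le> t\<close> \<open>0 \<le> w\<close> \<open>w \<le> pi / 2\<close> assms by (intro max_sph_annulus_ge) auto
  then show ?thesis
    unfolding w_def L_def by (simp add: mult.commute)
qed

lemma weak_Lq_max_sph_annulus_ge_separated:
  fixes E T :: "real set" and a b \<delta> q :: real
  assumes "E \<subseteq> {1..2}" "1 \<le> a" "0 < \<delta>" "\<delta> \<le> b - a" "b - a \<le> 1" "0 < q"
    and T: "finite T" "T \<subseteq> E \<inter> {a..b}" "delta_separated \<delta> T"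
  shows "ennreal (sqrt (\<delta> / (b - a)) / (8 * pi) * (card T * (pi * (b - a) * \<delta> / 4)) powr (1/q))
    \<le> weak_Lq q (max_sph E (indicator (annulus (2*b - a - \<delta>) (2*b - a))))"
proof (rule weak_Lq_ge)
  let ?X = "(\<Union>t\<in>T. annulus (2*b - a - t - \<delta>/2) (2*b - a - t)) \<inter> {z. 0 \<le> Re z}"
  have "0 < sqrt (\<delta> / (b - a))"
    using assms by simp
  then have less: "ennreal (sqrt (\<delta> / (b - a)) / (8 * pi)) < ennreal (sqrt (\<delta> / (b - a)) / (4 * pi))"
    using pi_gt3 by (subst ennreal_less_iff) (auto simp: field_simps)
  show "?X \<subseteq> {x. ennreal (sqrt (\<delta> / (b - a)) / (8 * pi))
      < max_sph E (indicator (annulus (2*b - a - \<delta>) (2*b - a))) x}"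
  proof
    fix x assume "x \<in> ?X"
    then obtain t where "t \<in> T" "x \<in> annulus (2*b - a - t - \<delta>/2) (2*b - a - t)" "0 \<le> Re x"
      by auto
    then have "ennreal (sqrt (\<delta> / (b - a)) / (4 * pi)) \<le> max_sph E (indicator (annulus (2*b - a - \<delta>) (2*b - a))) x"
      using T assms by (intro max_sph_thin_annulus_ge) auto
    then show "x \<in> {x. ennreal (sqrt (\<delta> / (b - a)) / (8 * pi))
        < max_sph E (indicator (annulus (2*b - a - \<delta>) (2*b - a))) x}"
      using less by simp
  qed
  show "ennreal (card T * (pi * (b - a) * \<delta> / 4)) \<le> emeasure lebesgue ?X"
    using T assms by (intro emeasure_right_half_annuli_ge) auto
  show "?X \<in> sets lebesgue"
    using \<open>finite T\<close> by auto
qed (use assms in auto)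

lemma sqrt_mult_powr_eq:
  fixes \<delta> L N q :: real
  assumes "0 < \<delta>" "0 < L" "0 \<le> N"
  shows "sqrt (\<delta> / L) * (N * L * \<delta>) powr (1/q) = \<delta> powr (1/2 + 1/q) * L powr (1/q - 1/2) * N powr (1/q)"
proof -
  have "sqrt (\<delta> / L) = \<delta> powr (1/2) / L powr (1/2)"
    using assms by (simp add: powr_half_sqrt[symmetric] powr_divide)
  moreover have "(N * L * \<delta>) powr (1/q) = N powr (1/q) * L powr (1/q) * \<delta> powr (1/q)"
    using assms by (simp add: powr_mult)
  moreover have "\<delta> powr (1/2 + 1/q) = \<delta> powr (1/2) * \<delta> powr (1/q)"
    by (simp add: powr_add)
  moreover have "L powr (1/q - 1/2) = L powr (1/q) / L powr (1/2)"
    by (simp add: powr_diff)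
  ultimately show ?thesis
    using \<open>0 < L\<close> by simp
qed

lemma weak_Lq_max_sph_annulus_ge:
  fixes E :: "real set" and a b \<delta> q :: real
  assumes "E \<subseteq> {1..2}" "1 \<le> a" "0 < \<delta>" "\<delta> \<le> b - a" "b - a \<le> 1" "0 < q"
  shows "ennreal (\<delta> powr (1/2 + 1/q) * (b - a) powr (1/q - 1/2) * real (cov_num (E \<inter> {a..b}) \<delta>) powr (1/q))
    \<le> ennreal (8 * pi * (8/pi) powr (1/q)) * weak_Lq q (max_sph E (indicator (annulus (2*b - a - \<delta>) (2*b - a))))"
proof -
  let ?L = "b - a" and ?N = "cov_num (E \<inter> {a..b}) \<delta>"
  obtain T where T: "finite T" "T \<subseteq> E \<inter> {a..b}" "delta_separated \<delta> T" and "?N \<le> 2 * card T"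
    using cov_num_le_twice_separated[OF \<open>0 < \<delta>\<close>, of "E \<inter> {a..b}" a b] by blast
  then have "?N * ?L * \<delta> \<le> 2 * card T * ?L * \<delta>"
    using assms by (intro mult_right_mono) (auto simp flip: of_nat_mult)
  then have "\<delta> powr (1/2 + 1/q) * ?L powr (1/q - 1/2) * ?N powr (1/q) \<le> sqrt (\<delta> / ?L) * (2 * card T * ?L * \<delta>) powr (1/q)"
    using assms by (auto simp flip: sqrt_mult_powr_eq intro!: mult_left_mono powr_mono2)
  also have "(2 * card T * ?L * \<delta>) powr (1/q) = (8/pi * (card T * (pi * ?L * \<delta> / 4))) powr (1/q)"
    by (rule arg_cong[where f = "\<lambda>y. y powr (1/q)"]) simp
  also have "\<dots> = (8/pi) powr (1/q) * (card T * (pi * ?L * \<delta> / 4)) powr (1/q)"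
    using assms by (subst powr_mult) auto
  also have "sqrt (\<delta> / ?L) * \<dots> = 8 * pi * (8/pi) powr (1/q) * (sqrt (\<delta> / ?L) / (8 * pi) * (card T * (pi * ?L * \<delta> / 4)) powr (1/q))"
    by simp
  finally have "ennreal (\<delta> powr (1/2 + 1/q) * ?L powr (1/q - 1/2) * ?N powr (1/q))
      \<le> ennreal (8 * pi * (8/pi) powr (1/q) * (sqrt (\<delta> / ?L) / (8 * pi) * (card T * (pi * ?L * \<delta> / 4)) powr (1/q)))"
    by (rule ennreal_leI)
  also have "\<dots> = ennreal (8 * pi * (8/pi) powr (1/q)) * ennreal (sqrt (\<delta> / ?L) / (8 * pi) * (card T * (pi * ?L * \<delta> / 4)) powr (1/q))"
    by (rule ennreal_mult) (use assms in auto)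
  also have "\<dots> \<le> ennreal (8 * pi * (8/pi) powr (1/q)) * weak_Lq q (max_sph E (indicator (annulus (2*b - a - \<delta>) (2*b - a))))"
    using weak_Lq_max_sph_annulus_ge_separated[OF assms T] by (rule mult_left_mono) simp
  finally show ?thesis .
qed

lemma lorentz_p1_thin_annulus_le:
  assumes "0 < p" "0 < \<delta>" "\<delta> \<le> R" "R \<le> 3"
  shows "lorentz_p1 p (indicator (annulus (R - \<delta>) R)) \<le> ennreal (p * (6 * pi * \<delta>) powr (1/p))"
proof (rule lorentz_p1_indicator_le)
  have "pi * (R^2 - (R - \<delta>)^2) = pi * \<delta> * (2 * R - \<delta>)"
    by (simp add: power2_eq_square algebra_simps)
  also have "\<dots> \<le> 6 * pi * \<delta>"
    using assms by (simp add: mult_left_le)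
  finally show "emeasure lebesgue (annulus (R - \<delta>) R) \<le> ennreal (6 * pi * \<delta>)"
    using assms by (subst emeasure_annulus) (auto intro: ennreal_leI)
qed (use assms in auto)

lemma weak_Lq_max_sph_thin_annulus_le:
  assumes bound: "\<And>f. radial f \<Longrightarrow> f \<in> borel_measurable lebesgue \<Longrightarrow> lorentz_p1 p f < \<infinity>
      \<Longrightarrow> weak_Lq q (max_sph E f) \<le> ennreal C * lorentz_p1 p f"
    and "0 < p" "0 < \<delta>" "\<delta> \<le> R" "R \<le> 3"
  shows "weak_Lq q (max_sph E (indicator (annulus (R - \<delta>) R))) \<le> ennreal (max C 0 * (p * (6 * pi * \<delta>) powr (1/p)))"
proof -
  let ?f = "indicator (annulus (R - \<delta>) R) :: complex \<Rightarrow> real"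
  have lorentz: "lorentz_p1 p ?f \<le> ennreal (p * (6 * pi * \<delta>) powr (1/p))"
    using assms by (intro lorentz_p1_thin_annulus_le)
  have "?f \<in> borel_measurable lebesgue"
    by (rule borel_measurable_indicator) (use annulus_borel in auto)
  moreover have "lorentz_p1 p ?f < \<infinity>"
    using lorentz by (simp add: order_le_less_trans)
  ultimately have "weak_Lq q (max_sph E ?f) \<le> ennreal C * lorentz_p1 p ?f"
    by (intro bound radial_indicator_annulus)
  also have "\<dots> \<le> ennreal (max C 0) * ennreal (p * (6 * pi * \<delta>) powr (1/p))"
    using lorentz by (intro mult_mono) (auto intro: ennreal_leI)
  also have "\<dots> = ennreal (max C 0 * (p * (6 * pi * \<delta>) powr (1/p)))"
    by (rule ennreal_mult[symmetric]) (use assms in auto)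
  finally show ?thesis .
qed

theorem proposition4p2:
  fixes E :: "real set" and p q :: real
  assumes "E \<subseteq> {1..2}"
    and "1 \<le> p" and "1 \<le> q"
    and bdd: "\<exists>C :: real. \<forall>f. radial f \<and> f \<in> borel_measurable lebesgue
                 \<and> lorentz_p1 p f < \<infinity>
               \<longrightarrow> weak_Lq q (max_sph E f) \<le> ennreal C * lorentz_p1 p f"
  shows "\<exists>C :: real. \<forall>a b \<delta> :: real.
           1 \<le> a \<and> b \<le> 2 \<and> 0 < \<delta> \<and> \<delta> \<le> b - a \<and> b - a \<le> 1 \<longrightarrow>
           \<delta> powr (1/2 + 1/q) * (b - a) powr (1/q - 1/2)
             * real (cov_num (E \<inter> {a..b}) \<delta>) powr (1/q)
           \<le> C * \<delta> powr (1/p)"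
proof -
  obtain C0 where C0: "\<And>f. radial f \<Longrightarrow> f \<in> borel_measurable lebesgue \<Longrightarrow> lorentz_p1 p f < \<infinity>
      \<Longrightarrow> weak_Lq q (max_sph E f) \<le> ennreal C0 * lorentz_p1 p f"
    using bdd by blast
  define K where "K = 8 * pi * (8/pi) powr (1/q)"
  define C where "C = K * max C0 0 * p * (6 * pi) powr (1/p)"
  have "\<delta> powr (1/2 + 1/q) * (b - a) powr (1/q - 1/2) * real (cov_num (E \<inter> {a..b}) \<delta>) powr (1/q)
      \<le> C * \<delta> powr (1/p)" if "1 \<le> a" "b \<le> 2" "0 < \<delta>" "\<delta> \<le> b - a" "b - a \<le> 1" for a b \<delta>
  proof -
    let ?f = "indicator (annulus (2*b - a - \<delta>) (2*b - a)) :: complex \<Rightarrow> real"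
    have "ennreal (\<delta> powr (1/2 + 1/q) * (b - a) powr (1/q - 1/2) * real (cov_num (E \<inter> {a..b}) \<delta>) powr (1/q))
        \<le> ennreal K * weak_Lq q (max_sph E ?f)"
      unfolding K_def by (rule weak_Lq_max_sph_annulus_ge) (use that assms in auto)
    also have "\<dots> \<le> ennreal K * ennreal (max C0 0 * (p * (6 * pi * \<delta>) powr (1/p)))"
      using that assms by (intro mult_left_mono weak_Lq_max_sph_thin_annulus_le[OF C0]) auto
    also have "\<dots> = ennreal (C * \<delta> powr (1/p))"
      using that assms unfolding C_def K_def by (simp add: ennreal_mult powr_mult mult_ac)
    moreover have "0 \<le> C * \<delta> powr (1/p)"
      using assms unfolding C_def K_def by simp
    ultimately show ?thesis
      by simp
  qed
  then show ?thesis
    by blast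
qed

end
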